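(* Let $n\ge 3$, $\mathbf{X}\in\{0,1\}^{n\times n}$, and let $(i_1,j_1)\neq(i_2,j_2)$ be elements of $\{1,\dots,n\}^2$ with $j_1\le j_2$. Put $i_{\min}=\min(i_1,i_2)$ and $i_{\max}=\max(i_1,i_2)$. Then $\mathbf{X}^{i_1,j_1}=\mathbf{X}^{i_2,j_2}$ if and only if all of the following hold: (1) $X_{i,j}=X_{i,j+1}$ for all $i\in[1,i_{\min}-1]\cup[i_{\max}+1,n]$ and all $j\in[j_1,j_2-1]$; (2) $X_{i,j}=X_{i+1,j}$ for all $i\in[i_{\min},i_{\max}-1]$ and all $j\in[1,j_1-1]\cup[j_2+1,n]$; (3) if $i_1\le i_2$: $X_{i,j}=X_{i+1,j+1}$ for all $i\in[i_{\min},i_{\max}-1]$ and $j\in[j_1,j_2-1]$; if $i_1>i_2$: $X_{i,j}=X_{i+1,j-1}$ for all $i\in[i_{\min},i_{\max}-1]$ and $j\in[j_1+1,j_2]$. (No other entries of $\mathbf{X}$ are constrained.)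
   Context: $X_{i,j}$ is the entry of $\mathbf{X}$ in row $i$, column $j$; $[a,b]=\{a,\dots,b\}$ (empty if $a>b$). $\mathbf{X}^{i,j}\in\{0,1\}^{(n-1)\times(n-1)}$ denotes the array obtained from $\mathbf{X}$ by deleting its $i$-th row and $j$-th column. *)

theory Defs
  imports Main
begin

text \<open>An n x n binary array is modelled as a function X :: nat => nat => bool,
  of which only the entries X i j with i, j in {1..n} are relevant
  (True = 1, False = 0).  Indices are 1-based.\<close>

definition del_rc :: "(nat \<Rightarrow> nat \<Rightarrow> 'a) \<Rightarrow> nat \<Rightarrow> nat \<Rightarrow> nat \<Rightarrow> nat \<Rightarrow> 'a" where
  "del_rc X i j a b = X (if a < i then a else Suc a) (if b < j then b else Suc b)"

definition arr_eq :: "nat \<Rightarrow> (nat \<Rightarrow> nat \<Rightarrow> 'a) \<Rightarrow> (nat \<Rightarrow> nat \<Rightarrow> 'a) \<Rightarrow> bool" where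
  "arr_eq m A B \<longleftrightarrow> (\<forall>a\<in>{1..m}. \<forall>b\<in>{1..m}. A a b = B a b)"

end

theory Submission
  imports Defs
begin

text \<open>Outside the row band [min i1 i2, max i1 i2) the two
  row maps agree, inside it one of them is shifted by one; the same holds for the columns
  and the band [j1, j2).  Hence the entrywise comparison of the two minors splits into four
  blocks: off both bands the entries agree trivially, and each of the other three blocks
  turns, after reindexing, into one of the conditions (1)-(3).\<close>

definition del_index :: "nat \<Rightarrow> nat \<Rightarrow> nat" where
  "del_index i a = (if a < i then a else Suc a)"

lemma del_rc_del_index: "del_rc X i j a b = X (del_index i a) (del_index j b)"
  by (simp add: del_rc_def del_index_def)

lemma del_index_eq_outside_band:
  "\<not> (min i i' \<le> a \<and> a < max i i') \<Longrightarrow> del_index i a = del_index i' a"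
  by (auto simp: del_index_def)

lemma del_index_less [simp]: "a < i \<Longrightarrow> del_index i a = a"
  by (simp add: del_index_def)

lemma del_index_ge [simp]: "i \<le> a \<Longrightarrow> del_index i a = Suc a"
  by (simp add: del_index_def)

lemma del_index_image_outside_band:
  assumes "1 \<le> lo" "lo \<le> hi" "hi \<le> n"
  shows "del_index lo ` ({1..n - 1} - {lo..hi - 1}) = {1..lo - 1} \<union> {hi + 1..n}"
proof -
  have "{1..n - 1} - {lo..hi - 1} = {1..lo - 1} \<union> {hi..n - 1}"
    using assms by auto
  moreover have "del_index lo ` {1..lo - 1} = {1..lo - 1}"
    by (auto simp: del_index_def)
  moreover have "del_index lo ` {hi..n - 1} = Suc ` {hi..n - 1}"
    using assms by (auto simp: del_index_def)
  ultimately show ?thesis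
    using assms by (simp add: image_Un)
qed

context
  fixes n i1 j1 i2 j2 :: nat
  assumes ranges: "i1 \<in> {1..n}" "j1 \<in> {1..n}" "i2 \<in> {1..n}" "j2 \<in> {1..n}"
    and cols_ordered: "j1 \<le> j2"
begin

lemma del_rc_eq_off_bands:
  assumes "a \<in> {1..n - 1} - {min i1 i2..max i1 i2 - 1}" "b \<in> {1..n - 1} - {j1..j2 - 1}"
  shows "del_rc X i1 j1 a b = del_rc X i2 j2 a b"
proof -
  have "del_index i1 a = del_index i2 a"
    using assms(1) ranges by (intro del_index_eq_outside_band) auto
  moreover have "del_index j1 b = del_index j2 b"
    using assms(2) ranges cols_ordered by (intro del_index_eq_outside_band) auto
  ultimately show ?thesis by (simp add: del_rc_del_index)
qed

lemma del_rc_eq_column_band_iff: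
  "(\<forall>a \<in> {1..n - 1} - {min i1 i2..max i1 i2 - 1}. \<forall>b \<in> {j1..j2 - 1}.
      del_rc X i1 j1 a b = del_rc X i2 j2 a b)
   \<longleftrightarrow> (\<forall>i \<in> {1..min i1 i2 - 1} \<union> {max i1 i2 + 1..n}. \<forall>j \<in> {j1..j2 - 1}.
      X i j = X i (j + 1))"
proof -
  let ?lo = "min i1 i2" and ?hi = "max i1 i2"
  have "del_rc X i1 j1 a b = del_rc X i2 j2 a b \<longleftrightarrow>
      X (del_index ?lo a) b = X (del_index ?lo a) (b + 1)"
    if "a \<in> {1..n - 1} - {?lo..?hi - 1}" "b \<in> {j1..j2 - 1}" for a b
  proof -
    have "del_index i1 a = del_index ?lo a" "del_index i2 a = del_index ?lo a"
      using that ranges by (auto intro!: del_index_eq_outside_band)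
    moreover have "del_index j1 b = Suc b" "del_index j2 b = b"
      using that ranges by auto
    ultimately show ?thesis by (auto simp: del_rc_del_index)
  qed
  then have "(\<forall>a \<in> {1..n - 1} - {?lo..?hi - 1}. \<forall>b \<in> {j1..j2 - 1}.
        del_rc X i1 j1 a b = del_rc X i2 j2 a b)
    \<longleftrightarrow> (\<forall>i \<in> del_index ?lo ` ({1..n - 1} - {?lo..?hi - 1}). \<forall>j \<in> {j1..j2 - 1}.
        X i j = X i (j + 1))"
    by simp
  also have "del_index ?lo ` ({1..n - 1} - {?lo..?hi - 1}) = {1..?lo - 1} \<union> {?hi + 1..n}"
    using ranges by (intro del_index_image_outside_band) auto
  finally show ?thesis .
qed

lemma del_rc_eq_row_band_iff:
  "(\<forall>a \<in> {min i1 i2..max i1 i2 - 1}. \<forall>b \<in> {1..n - 1} - {j1..j2 - 1}.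
      del_rc X i1 j1 a b = del_rc X i2 j2 a b)
   \<longleftrightarrow> (\<forall>i \<in> {min i1 i2..max i1 i2 - 1}. \<forall>j \<in> {1..j1 - 1} \<union> {j2 + 1..n}.
      X i j = X (i + 1) j)"
proof -
  let ?lo = "min i1 i2" and ?hi = "max i1 i2"
  have "del_rc X i1 j1 a b = del_rc X i2 j2 a b \<longleftrightarrow>
      X a (del_index j1 b) = X (a + 1) (del_index j1 b)"
    if "a \<in> {?lo..?hi - 1}" "b \<in> {1..n - 1} - {j1..j2 - 1}" for a b
  proof -
    have "del_index j2 b = del_index j1 b"
      using that ranges cols_ordered by (intro del_index_eq_outside_band) auto
    then show ?thesis
      using that ranges by (cases "i1 \<le> i2") (auto simp: del_rc_del_index)
  qed
  then have "(\<forall>a \<in> {?lo..?hi - 1}. \<forall>b \<in> {1..n - 1} - {j1..j2 - 1}.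
        del_rc X i1 j1 a b = del_rc X i2 j2 a b)
    \<longleftrightarrow> (\<forall>i \<in> {?lo..?hi - 1}. \<forall>j \<in> del_index j1 ` ({1..n - 1} - {j1..j2 - 1}).
        X i j = X (i + 1) j)"
    by simp
  also have "del_index j1 ` ({1..n - 1} - {j1..j2 - 1}) = {1..j1 - 1} \<union> {j2 + 1..n}"
    using ranges cols_ordered by (intro del_index_image_outside_band) auto
  finally show ?thesis .
qed

lemma del_rc_eq_both_bands_iff:
  "(\<forall>a \<in> {min i1 i2..max i1 i2 - 1}. \<forall>b \<in> {j1..j2 - 1}.
      del_rc X i1 j1 a b = del_rc X i2 j2 a b)
   \<longleftrightarrow> (if i1 \<le> i2 then
        (\<forall>i \<in> {min i1 i2..max i1 i2 - 1}. \<forall>j \<in> {j1..j2 - 1}. X i j = X (i + 1) (j + 1))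
      else
        (\<forall>i \<in> {min i1 i2..max i1 i2 - 1}. \<forall>j \<in> {j1 + 1..j2}. X i j = X (i + 1) (j - 1)))"
proof (cases "i1 \<le> i2")
  case True
  then show ?thesis
    using ranges by (auto simp: del_rc_del_index)
next
  case False
  have "del_rc X i1 j1 a b = del_rc X i2 j2 a b \<longleftrightarrow> X a (Suc b) = X (a + 1) (Suc b - 1)"
    if "a \<in> {min i1 i2..max i1 i2 - 1}" "b \<in> {j1..j2 - 1}" for a b
    using that False ranges by (auto simp: del_rc_del_index)
  then have "(\<forall>a \<in> {min i1 i2..max i1 i2 - 1}. \<forall>b \<in> {j1..j2 - 1}.
        del_rc X i1 j1 a b = del_rc X i2 j2 a b)
    \<longleftrightarrow> (\<forall>i \<in> {min i1 i2..max i1 i2 - 1}. \<forall>j \<in> Suc ` {j1..j2 - 1}.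
        X i j = X (i + 1) (j - 1))"
    by (simp del: image_Suc_atLeastAtMost)
  also have "Suc ` {j1..j2 - 1} = {j1 + 1..j2}"
    using ranges by simp
  finally show ?thesis
    using False by simp
qed

lemma arr_eq_del_rc_iff_bands:
  "arr_eq (n - 1) (del_rc X i1 j1) (del_rc X i2 j2) \<longleftrightarrow>
    (\<forall>a \<in> {1..n - 1} - {min i1 i2..max i1 i2 - 1}. \<forall>b \<in> {j1..j2 - 1}.
      del_rc X i1 j1 a b = del_rc X i2 j2 a b)
  \<and> (\<forall>a \<in> {min i1 i2..max i1 i2 - 1}. \<forall>b \<in> {1..n - 1} - {j1..j2 - 1}.
      del_rc X i1 j1 a b = del_rc X i2 j2 a b)
  \<and> (\<forall>a \<in> {min i1 i2..max i1 i2 - 1}. \<forall>b \<in> {j1..j2 - 1}.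
      del_rc X i1 j1 a b = del_rc X i2 j2 a b)"
proof -
  have "{min i1 i2..max i1 i2 - 1} \<subseteq> {1..n - 1}" "{j1..j2 - 1} \<subseteq> {1..n - 1}"
    using ranges by auto
  then show ?thesis
    unfolding arr_eq_def using del_rc_eq_off_bands by blast
qed

end

theorem lemma3:
  fixes n :: nat and X :: "nat \<Rightarrow> nat \<Rightarrow> bool" and i1 j1 i2 j2 :: nat
  assumes "n \<ge> 3"
    and "i1 \<in> {1..n}" "j1 \<in> {1..n}" "i2 \<in> {1..n}" "j2 \<in> {1..n}"
    and "(i1, j1) \<noteq> (i2, j2)"
    and "j1 \<le> j2"
  shows "arr_eq (n - 1) (del_rc X i1 j1) (del_rc X i2 j2) \<longleftrightarrow>
    ((\<forall>i \<in> {1..min i1 i2 - 1} \<union> {max i1 i2 + 1..n}. \<forall>j \<in> {j1..j2 - 1}.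
        X i j = X i (j + 1))
   \<and> (\<forall>i \<in> {min i1 i2..max i1 i2 - 1}. \<forall>j \<in> {1..j1 - 1} \<union> {j2 + 1..n}.
        X i j = X (i + 1) j)
   \<and> (if i1 \<le> i2 then
        (\<forall>i \<in> {min i1 i2..max i1 i2 - 1}. \<forall>j \<in> {j1..j2 - 1}. X i j = X (i + 1) (j + 1))
      else
        (\<forall>i \<in> {min i1 i2..max i1 i2 - 1}. \<forall>j \<in> {j1 + 1..j2}. X i j = X (i + 1) (j - 1))))"
  using assms(2-5,7)
  by (simp only: arr_eq_del_rc_iff_bands del_rc_eq_column_band_iff del_rc_eq_row_band_iff
      del_rc_eq_both_bands_iff)

end
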